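(* Let $G$ be a group and $n\ge1$. Then $\bigcup_{i=1}^n\operatorname{Spec}_R(G)^{(i)}\subseteq\operatorname{Spec}_R(G^n)$. Equality holds if $\operatorname{Aut}(G^n)=\operatorname{Aut}(G)\wr S_n$, i.e. if every automorphism of $G^n$ is of the form $(g_1,\dots,g_n)\mapsto(\phi_1(g_{\sigma(1)}),\dots,\phi_n(g_{\sigma(n)}))$ for some $\phi_1,\dots,\phi_n\in\operatorname{Aut}(G)$ and $\sigma\in S_n$.
   Context: $R(\psi)$ is the Reidemeister number of an endomorphism $\psi$ (number of classes of the relation $x\sim gx\psi(g)^{-1}$), and $\operatorname{Spec}_R(A)=\{R(\psi)\mid\psi\in\operatorname{Aut}(A)\}$. For $S\subseteq\mathbb{N}\cup\{\infty\}$, $S^{(i)}=\{a_1\cdots a_i\mid a_j\in S\}$ is the $i$-fold product set, with the convention $a\cdot\infty=\infty$. *)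

theory Defs
  imports "HOL-Algebra.Algebra" "HOL-Library.Extended_Nat" "HOL-Combinatorics.Permutations"
begin

definition reid_rel :: "('a, 'b) monoid_scheme \<Rightarrow> ('a \<Rightarrow> 'a) \<Rightarrow> ('a \<times> 'a) set" where
  "reid_rel G psi = {(x, y). x \<in> carrier G \<and> y \<in> carrier G \<and>
      (\<exists>g\<in>carrier G. y = g \<otimes>\<^bsub>G\<^esub> x \<otimes>\<^bsub>G\<^esub> inv\<^bsub>G\<^esub> (psi g))}"

definition reidemeister :: "('a, 'b) monoid_scheme \<Rightarrow> ('a \<Rightarrow> 'a) \<Rightarrow> enat" where
  "reidemeister G psi =
     (if finite (carrier G // reid_rel G psi) then enat (card (carrier G // reid_rel G psi)) else \<infinity>)"

definition spec_R :: "('a, 'b) monoid_scheme \<Rightarrow> enat set" where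
  "spec_R G = reidemeister G ` auto G"

definition prod_set :: "enat set \<Rightarrow> nat \<Rightarrow> enat set" where
  "prod_set S i = {(\<Prod>j<i. a j) | a. \<forall>j<i. a j \<in> S}"

definition dir_power :: "('a, 'b) monoid_scheme \<Rightarrow> nat \<Rightarrow> (nat \<Rightarrow> 'a) monoid" where
  "dir_power G n = product_group {..<n} (\<lambda>_. G)"

end

theory Submission
  imports Defs
begin

text \<open>For an automorphism \<open>x \<mapsto> (\<lambda>i. \<phi>\<^sub>i (x (\<sigma> i)))\<close> of \<open>G\<^sup>n\<close> the twisted conjugacy classes
  decompose along the cycles of \<open>\<sigma>\<close>. A coordinate \<open>k\<close> fixed by \<open>\<sigma>\<close> splits off as a direct
  factor, multiplying the Reidemeister number by \<open>R(\<phi>\<^sub>k)\<close>. If \<open>\<sigma> j = k \<noteq> \<sigma> k\<close>, every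
  element is twisted conjugate to one with trivial \<open>k\<close>-th coordinate, and coordinate \<open>k\<close> can
  be removed, replacing \<open>\<sigma>\<close> by \<open>\<sigma> \<circ> (j k)\<close> and \<open>\<phi>\<^sub>j\<close> by \<open>\<phi>\<^sub>j \<circ> \<phi>\<^sub>k\<close>, without changing
  the number of classes. So the Reidemeister number is a product of one element of
  \<open>Spec\<^sub>R(G)\<close> per cycle; conversely, choosing \<open>\<sigma>\<close> with \<open>c\<close> cycles realizes every product
  of \<open>c \<le> n\<close> such numbers.\<close>

section \<open>Cardinalities of quotients\<close>

definition ecard :: "'a set \<Rightarrow> enat" where
  "ecard A = (if finite A then enat (card A) else \<infinity>)"

lemma ecard_bij_betw: "bij_betw f A B \<Longrightarrow> ecard A = ecard B"
  by (simp add: ecard_def bij_betw_finite bij_betw_same_card)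

lemma ecard_Times: "ecard (A \<times> B) = ecard A * ecard B"
proof (cases "A = {} \<or> B = {}")
  case True
  then show ?thesis by (auto simp: ecard_def zero_enat_def[symmetric])
next
  case False
  then show ?thesis
    by (auto simp: ecard_def card_cartesian_product finite_cartesian_product_iff card_gt_0_iff)
qed

lemma reidemeister_eq_ecard: "reidemeister G \<psi> = ecard (carrier G // reid_rel G \<psi>)"
  by (simp add: reidemeister_def ecard_def)

lemma bij_betw_quotients_by_representatives:
  assumes A: "equiv A r" and B: "equiv B s" and e: "\<And>b. b \<in> B \<Longrightarrow> e b \<in> A"
    and rep: "\<And>a. a \<in> A \<Longrightarrow> \<exists>b\<in>B. (a, e b) \<in> r"
    and reflect: "\<And>b b'. b \<in> B \<Longrightarrow> b' \<in> B \<Longrightarrow> (e b, e b') \<in> r \<longleftrightarrow> (b, b') \<in> s"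
  shows "bij_betw (\<lambda>Y. r `` (e ` Y)) (B // s) (A // r)"
proof -
  have class_eq: "r `` (e ` (s `` {b})) = r `` {e b}" if "b \<in> B" for b
  proof
    show "r `` (e ` (s `` {b})) \<subseteq> r `` {e b}"
    proof
      fix a assume "a \<in> r `` (e ` (s `` {b}))"
      then obtain b' where "(b, b') \<in> s" "(e b', a) \<in> r" by auto
      moreover have "b' \<in> B" using \<open>(b, b') \<in> s\<close> B by (meson equiv_class_eq_iff)
      ultimately have "(e b, e b') \<in> r" using reflect that by blast
      then show "a \<in> r `` {e b}" using \<open>(e b', a) \<in> r\<close> A by (meson ImageI equiv_def insertI1 transD)
    qed
    show "r `` {e b} \<subseteq> r `` (e ` (s `` {b}))"
      using that B by (auto dest: equiv_class_self)
  qed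
  show ?thesis
  proof (rule bij_betw_imageI)
    show "inj_on (\<lambda>Y. r `` (e ` Y)) (B // s)"
    proof (rule inj_onI)
      fix U V assume "U \<in> B // s" "V \<in> B // s" "r `` (e ` U) = r `` (e ` V)"
      then obtain b b' where bb: "b \<in> B" "b' \<in> B" "U = s `` {b}" "V = s `` {b'}"
        and "r `` {e b} = r `` {e b'}" by (auto elim!: quotientE simp: class_eq)
      then have "(e b, e b') \<in> r" using A e by (meson eq_equiv_class_iff)
      then show "U = V" using reflect bb B by (simp add: equiv_class_eq)
    qed
    show "(\<lambda>Y. r `` (e ` Y)) ` (B // s) = A // r"
    proof
      show "(\<lambda>Y. r `` (e ` Y)) ` (B // s) \<subseteq> A // r"
        using e by (auto elim!: quotientE simp: class_eq intro!: quotientI)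
      show "A // r \<subseteq> (\<lambda>Y. r `` (e ` Y)) ` (B // s)"
      proof
        fix U assume "U \<in> A // r"
        then obtain a where a: "a \<in> A" "U = r `` {a}" by (auto elim: quotientE)
        then obtain b where b: "b \<in> B" "(a, e b) \<in> r" using rep by blast
        then have "U = r `` {e b}" using a A by (simp add: equiv_class_eq)
        then show "U \<in> (\<lambda>Y. r `` (e ` Y)) ` (B // s)"
          using b class_eq by (auto intro!: image_eqI[of _ _ "s `` {b}"] quotientI)
      qed
    qed
  qed
qed

corollary ecard_quotient_eq_by_representatives:
  assumes "equiv A r" "equiv B s" "\<And>b. b \<in> B \<Longrightarrow> e b \<in> A"
    and "\<And>a. a \<in> A \<Longrightarrow> \<exists>b\<in>B. (a, e b) \<in> r"
    and "\<And>b b'. b \<in> B \<Longrightarrow> b' \<in> B \<Longrightarrow> (e b, e b') \<in> r \<longleftrightarrow> (b, b') \<in> s"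
  shows "ecard (A // r) = ecard (B // s)"
  using ecard_bij_betw[OF bij_betw_quotients_by_representatives[OF assms]] by simp

definition rel_Times :: "('a \<times> 'a) set \<Rightarrow> ('b \<times> 'b) set \<Rightarrow> (('a \<times> 'b) \<times> ('a \<times> 'b)) set" where
  "rel_Times r s = {((a, b), (a', b')). (a, a') \<in> r \<and> (b, b') \<in> s}"

lemma equiv_rel_Times:
  assumes "equiv A r" "equiv B s" shows "equiv (A \<times> B) (rel_Times r s)"
proof (rule equivI)
  show "rel_Times r s \<subseteq> (A \<times> B) \<times> (A \<times> B)" "refl_on (A \<times> B) (rel_Times r s)"
    using assms unfolding rel_Times_def equiv_def refl_on_def by blast+
  show "sym (rel_Times r s)"
    using assms unfolding rel_Times_def equiv_def by (auto intro!: symI dest: symD)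
  show "trans (rel_Times r s)"
    using assms unfolding rel_Times_def equiv_def by (auto intro!: transI dest: transD)
qed

lemma bij_betw_quotient_rel_Times:
  assumes A: "equiv A r" and B: "equiv B s"
  shows "bij_betw (\<lambda>(U, V). U \<times> V) (A // r \<times> B // s) ((A \<times> B) // rel_Times r s)"
proof (rule bij_betw_imageI)
  have class_eq: "rel_Times r s `` {(a, b)} = r `` {a} \<times> s `` {b}" for a b
    unfolding rel_Times_def by auto
  show "inj_on (\<lambda>(U, V). U \<times> V) (A // r \<times> B // s)"
  proof (rule inj_onI, clarify)
    fix U V U' V' assume "U \<in> A // r" "V \<in> B // s" "U' \<in> A // r" "V' \<in> B // s" "U \<times> V = U' \<times> V'"
    moreover have "U \<noteq> {}" "V \<noteq> {}" "U' \<noteq> {}" "V' \<noteq> {}"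
      using calculation A B by (auto simp: in_quotient_imp_non_empty)
    ultimately show "U = U' \<and> V = V'" by (simp add: times_eq_iff)
  qed
  show "(\<lambda>(U, V). U \<times> V) ` (A // r \<times> B // s) = (A \<times> B) // rel_Times r s"
  proof
    show "(\<lambda>(U, V). U \<times> V) ` (A // r \<times> B // s) \<subseteq> (A \<times> B) // rel_Times r s"
      by (auto elim!: quotientE simp: class_eq[symmetric] intro!: quotientI)
    show "(A \<times> B) // rel_Times r s \<subseteq> (\<lambda>(U, V). U \<times> V) ` (A // r \<times> B // s)"
      by (auto elim!: quotientE simp: class_eq rel_Times_def
          intro!: image_eqI[of _ _ "(r `` {_}, s `` {_})"] quotientI)
  qed
qed

corollary ecard_quotient_rel_Times:
  assumes "equiv A r" "equiv B s"
  shows "ecard ((A \<times> B) // rel_Times r s) = ecard (A // r) * ecard (B // s)"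
  using ecard_bij_betw[OF bij_betw_quotient_rel_Times[OF assms]] by (simp add: ecard_Times)

lemma reid_rel_equiv:
  assumes "group H" "\<psi> \<in> hom H H"
  shows "equiv (carrier H) (reid_rel H \<psi>)"
proof -
  interpret H: group H by fact
  interpret h: group_hom H H \<psi> using assms by (simp add: group_hom_def group_hom_axioms_def)
  show ?thesis
  proof (rule equivI)
    show "reid_rel H \<psi> \<subseteq> carrier H \<times> carrier H" unfolding reid_rel_def by auto
    show "refl_on (carrier H) (reid_rel H \<psi>)"
      unfolding refl_on_def reid_rel_def by (auto intro!: bexI[of _ "\<one>\<^bsub>H\<^esub>"])
    show "sym (reid_rel H \<psi>)"
    proof (rule symI)
      fix x y assume "(x, y) \<in> reid_rel H \<psi>"
      then obtain g where x: "x \<in> carrier H" and y: "y \<in> carrier H" and g: "g \<in> carrier H"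
        and y_eq: "y = g \<otimes>\<^bsub>H\<^esub> x \<otimes>\<^bsub>H\<^esub> inv\<^bsub>H\<^esub> (\<psi> g)" unfolding reid_rel_def by auto
      have "x = inv\<^bsub>H\<^esub> g \<otimes>\<^bsub>H\<^esub> y \<otimes>\<^bsub>H\<^esub> inv\<^bsub>H\<^esub> (\<psi> (inv\<^bsub>H\<^esub> g))"
        using x g by (simp add: y_eq h.hom_inv H.m_assoc; simp add: H.m_assoc[symmetric])
      then show "(y, x) \<in> reid_rel H \<psi>"
        unfolding reid_rel_def using x y g by (auto intro!: bexI[of _ "inv\<^bsub>H\<^esub> g"])
    qed
    show "trans (reid_rel H \<psi>)"
    proof (rule transI)
      fix x y z assume "(x, y) \<in> reid_rel H \<psi>" "(y, z) \<in> reid_rel H \<psi>"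
      then obtain g h where x: "x \<in> carrier H" and g: "g \<in> carrier H" and h: "h \<in> carrier H"
        and z: "z \<in> carrier H" and y_eq: "y = g \<otimes>\<^bsub>H\<^esub> x \<otimes>\<^bsub>H\<^esub> inv\<^bsub>H\<^esub> (\<psi> g)"
        and z_eq: "z = h \<otimes>\<^bsub>H\<^esub> y \<otimes>\<^bsub>H\<^esub> inv\<^bsub>H\<^esub> (\<psi> h)"
        unfolding reid_rel_def by auto
      have "z = (h \<otimes>\<^bsub>H\<^esub> g) \<otimes>\<^bsub>H\<^esub> x \<otimes>\<^bsub>H\<^esub> inv\<^bsub>H\<^esub> (\<psi> (h \<otimes>\<^bsub>H\<^esub> g))"
        using x g h by (simp add: z_eq y_eq H.m_assoc H.inv_mult_group)
      then show "(x, z) \<in> reid_rel H \<psi>"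
        unfolding reid_rel_def using x z g h by (auto intro!: bexI[of _ "h \<otimes>\<^bsub>H\<^esub> g"])
    qed
  qed
qed

lemma reidemeister_cong:
  "(\<And>x. x \<in> carrier H \<Longrightarrow> \<psi> x = \<psi>' x) \<Longrightarrow> reidemeister H \<psi> = reidemeister H \<psi>'"
proof -
  assume "\<And>x. x \<in> carrier H \<Longrightarrow> \<psi> x = \<psi>' x"
  then have "reid_rel H \<psi> = reid_rel H \<psi>'" unfolding reid_rel_def by auto
  then show ?thesis unfolding reidemeister_def by simp
qed

lemma reidemeister_trivial_group: "carrier H = {x} \<Longrightarrow> reidemeister H \<psi> = 1"
  by (simp add: reidemeister_def singleton_quotient one_enat_def)

section \<open>Automorphisms of wreath type\<close>

abbreviation power_group :: "('a, 'b) monoid_scheme \<Rightarrow> nat set \<Rightarrow> (nat \<Rightarrow> 'a) monoid" where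
  "power_group G I \<equiv> product_group I (\<lambda>_. G)"

definition wreath_map :: "nat set \<Rightarrow> (nat \<Rightarrow> nat) \<Rightarrow> (nat \<Rightarrow> 'a \<Rightarrow> 'a) \<Rightarrow> (nat \<Rightarrow> 'a) \<Rightarrow> nat \<Rightarrow> 'a" where
  "wreath_map I \<sigma> \<phi> = (\<lambda>x. \<lambda>i\<in>I. \<phi> i (x (\<sigma> i)))"

lemma wreath_map_closed:
  assumes "\<sigma> permutes I" "\<forall>i\<in>I. \<phi> i \<in> carrier G \<rightarrow> carrier G" "x \<in> carrier (power_group G I)"
  shows "wreath_map I \<sigma> \<phi> x \<in> carrier (power_group G I)"
  using assms permutes_in_image[OF assms(1)] by (auto simp: wreath_map_def)

lemma wreath_map_hom:
  assumes "\<sigma> permutes I" "\<forall>i\<in>I. \<phi> i \<in> hom G G"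
  shows "wreath_map I \<sigma> \<phi> \<in> hom (power_group G I) (power_group G I)"
proof (rule homI)
  have closed: "\<forall>i\<in>I. \<phi> i \<in> carrier G \<rightarrow> carrier G" using assms(2) by (auto simp: hom_def)
  show "wreath_map I \<sigma> \<phi> x \<in> carrier (power_group G I)" if "x \<in> carrier (power_group G I)" for x
    using wreath_map_closed[OF assms(1) closed that] .
  fix x y assume "x \<in> carrier (power_group G I)" "y \<in> carrier (power_group G I)"
  then show "wreath_map I \<sigma> \<phi> (x \<otimes>\<^bsub>power_group G I\<^esub> y)
      = wreath_map I \<sigma> \<phi> x \<otimes>\<^bsub>power_group G I\<^esub> wreath_map I \<sigma> \<phi> y"
    unfolding mult_product_group wreath_map_def
  proof (intro restrict_ext)
    fix i assume i: "i \<in> I"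
    then have "\<sigma> i \<in> I" using permutes_in_image[OF assms(1)] by simp
    moreover have "x (\<sigma> i) \<in> carrier G" "y (\<sigma> i) \<in> carrier G"
      using \<open>\<sigma> i \<in> I\<close> \<open>x \<in> carrier (power_group G I)\<close> \<open>y \<in> carrier (power_group G I)\<close> by auto
    ultimately show "\<phi> i ((\<lambda>i\<in>I. x i \<otimes>\<^bsub>G\<^esub> y i) (\<sigma> i))
        = (\<lambda>i\<in>I. \<phi> i (x (\<sigma> i))) i \<otimes>\<^bsub>G\<^esub> (\<lambda>i\<in>I. \<phi> i (y (\<sigma> i))) i"
      using i assms(2) by (simp add: hom_mult)
  qed
qed

lemma wreath_map_bij:
  assumes \<sigma>: "\<sigma> permutes I" and \<phi>: "\<forall>i\<in>I. bij_betw (\<phi> i) (carrier G) (carrier G)"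
  shows "bij_betw (wreath_map I \<sigma> \<phi>) (carrier (power_group G I)) (carrier (power_group G I))"
proof -
  let ?\<tau> = "Hilbert_Choice.inv \<sigma>"
  let ?\<psi> = "\<lambda>i. inv_into (carrier G) (\<phi> (?\<tau> i))"
  have \<tau>: "?\<tau> permutes I" using permutes_inv[OF \<sigma>] .
  have inverses: "\<sigma> (?\<tau> i) = i" "?\<tau> (\<sigma> i) = i" for i using permutes_inverses[OF \<sigma>] by auto
  have \<psi>: "\<forall>i\<in>I. bij_betw (?\<psi> i) (carrier G) (carrier G)"
    using \<phi> permutes_in_image[OF \<tau>] by (auto intro: bij_betw_inv_into)
  have "\<forall>i\<in>I. F i \<in> carrier G \<rightarrow> carrier G" if "\<forall>i\<in>I. bij_betw (F i) (carrier G) (carrier G)" for F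
    using that by (auto simp: bij_betw_def)
  note closed = wreath_map_closed[OF \<sigma> this[OF \<phi>]] wreath_map_closed[OF \<tau> this[OF \<psi>]]
  show ?thesis
  proof (rule bij_betw_byWitness[where f' = "wreath_map I ?\<tau> ?\<psi>"])
    have "?\<psi> i (\<phi> (?\<tau> i) (x i)) = x i" if "i \<in> I" "x \<in> carrier (power_group G I)" for i x
      using \<phi> permutes_in_image[OF \<tau>] that by (auto intro: bij_betw_inv_into_left)
    then show "\<forall>x\<in>carrier (power_group G I). wreath_map I ?\<tau> ?\<psi> (wreath_map I \<sigma> \<phi> x) = x"
      using permutes_in_image[OF \<tau>]
      by (auto simp: wreath_map_def inverses PiE_iff extensional_def intro!: ext)
    have "\<phi> i (inv_into (carrier G) (\<phi> i) (y i)) = y i" if "i \<in> I" "y \<in> carrier (power_group G I)" for i y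
      using \<phi> that by (auto intro: bij_betw_inv_into_right)
    then show "\<forall>y\<in>carrier (power_group G I). wreath_map I \<sigma> \<phi> (wreath_map I ?\<tau> ?\<psi> y) = y"
      using permutes_in_image[OF \<sigma>]
      by (auto simp: wreath_map_def inverses PiE_iff extensional_def intro!: ext)
  qed (use closed in blast)+
qed

lemma wreath_map_auto:
  assumes G: "group G" and \<sigma>: "\<sigma> permutes I" and \<phi>: "\<forall>i\<in>I. \<phi> i \<in> auto G"
  shows "restrict (wreath_map I \<sigma> \<phi>) (carrier (power_group G I)) \<in> auto (power_group G I)"
proof -
  let ?P = "power_group G I"
  have "\<forall>i\<in>I. \<phi> i \<in> hom G G" "\<forall>i\<in>I. bij_betw (\<phi> i) (carrier G) (carrier G)"
    using \<phi> by (auto simp: auto_def Bij_def)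
  note hom = wreath_map_hom[OF \<sigma> this(1)] and bij = wreath_map_bij[OF \<sigma> this(2)]
  have "group ?P" using G by simp
  from group.hom_eq[OF this hom]
  have "restrict (wreath_map I \<sigma> \<phi>) (carrier ?P) \<in> hom ?P ?P" by simp
  moreover have "restrict (wreath_map I \<sigma> \<phi>) (carrier ?P) \<in> Bij (carrier ?P)"
    using bij unfolding Bij_def by (simp add: bij_betw_restrict_eq)
  ultimately show ?thesis by (simp add: auto_def)
qed

lemma reid_rel_wreath_map_iff:
  assumes G: "group G" and \<sigma>: "\<sigma> permutes I" and \<phi>: "\<forall>i\<in>I. \<phi> i \<in> hom G G"
  shows "(x, y) \<in> reid_rel (power_group G I) (wreath_map I \<sigma> \<phi>) \<longleftrightarrow>
    x \<in> carrier (power_group G I) \<and> y \<in> carrier (power_group G I) \<and>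
    (\<exists>g\<in>carrier (power_group G I). \<forall>i\<in>I. y i = g i \<otimes>\<^bsub>G\<^esub> x i \<otimes>\<^bsub>G\<^esub> inv\<^bsub>G\<^esub> (\<phi> i (g (\<sigma> i))))"
proof -
  let ?P = "power_group G I"
  have twist: "g \<otimes>\<^bsub>?P\<^esub> x \<otimes>\<^bsub>?P\<^esub> inv\<^bsub>?P\<^esub> (wreath_map I \<sigma> \<phi> g)
      = (\<lambda>i\<in>I. g i \<otimes>\<^bsub>G\<^esub> x i \<otimes>\<^bsub>G\<^esub> inv\<^bsub>G\<^esub> (\<phi> i (g (\<sigma> i))))"
    if "g \<in> carrier ?P" for g
  proof -
    have "wreath_map I \<sigma> \<phi> g \<in> carrier ?P"
      using wreath_map_hom[OF \<sigma> \<phi>] that by (rule hom_in_carrier)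
    then have "inv\<^bsub>?P\<^esub> (wreath_map I \<sigma> \<phi> g) = (\<lambda>i\<in>I. inv\<^bsub>G\<^esub> (wreath_map I \<sigma> \<phi> g i))"
      using G by (intro inv_product_group) auto
    then show ?thesis unfolding mult_product_group
      by (simp add: wreath_map_def cong: restrict_cong)
  qed
  have componentwise: "y = (\<lambda>i\<in>I. g i \<otimes>\<^bsub>G\<^esub> x i \<otimes>\<^bsub>G\<^esub> inv\<^bsub>G\<^esub> (\<phi> i (g (\<sigma> i))))
      \<longleftrightarrow> (\<forall>i\<in>I. y i = g i \<otimes>\<^bsub>G\<^esub> x i \<otimes>\<^bsub>G\<^esub> inv\<^bsub>G\<^esub> (\<phi> i (g (\<sigma> i))))"
    if "y \<in> carrier ?P" for g
    using that by (auto simp: PiE_iff extensional_def)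
  have "(\<exists>g\<in>carrier ?P. y = g \<otimes>\<^bsub>?P\<^esub> x \<otimes>\<^bsub>?P\<^esub> inv\<^bsub>?P\<^esub> (wreath_map I \<sigma> \<phi> g)) \<longleftrightarrow>
      (\<exists>g\<in>carrier ?P. \<forall>i\<in>I. y i = g i \<otimes>\<^bsub>G\<^esub> x i \<otimes>\<^bsub>G\<^esub> inv\<^bsub>G\<^esub> (\<phi> i (g (\<sigma> i))))"
    if "y \<in> carrier ?P"
  proof (rule bex_cong[OF refl])
    fix g assume "g \<in> carrier ?P"
    show "y = g \<otimes>\<^bsub>?P\<^esub> x \<otimes>\<^bsub>?P\<^esub> inv\<^bsub>?P\<^esub> (wreath_map I \<sigma> \<phi> g) \<longleftrightarrow>
        (\<forall>i\<in>I. y i = g i \<otimes>\<^bsub>G\<^esub> x i \<otimes>\<^bsub>G\<^esub> inv\<^bsub>G\<^esub> (\<phi> i (g (\<sigma> i))))"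
      unfolding twist[OF \<open>g \<in> carrier ?P\<close>] using componentwise[OF that] .
  qed
  then show ?thesis unfolding reid_rel_def by blast
qed

lemma reidemeister_wreath_map_cong:
  assumes \<sigma>: "\<sigma> permutes I" and "\<forall>i\<in>I. \<sigma> i = \<sigma>' i" "\<forall>i\<in>I. \<forall>y\<in>carrier G. \<phi> i y = \<phi>' i y"
  shows "reidemeister (power_group G I) (wreath_map I \<sigma> \<phi>)
       = reidemeister (power_group G I) (wreath_map I \<sigma>' \<phi>')"
proof (rule reidemeister_cong)
  fix x assume x: "x \<in> carrier (power_group G I)"
  have "x (\<sigma> i) \<in> carrier G" if "i \<in> I" for i
    using x permutes_in_image[OF \<sigma>] that by auto
  then show "wreath_map I \<sigma> \<phi> x = wreath_map I \<sigma>' \<phi>' x"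
    using assms(2,3) unfolding wreath_map_def by (intro restrict_ext) metis
qed

section \<open>Splitting off and collapsing coordinates\<close>

lemma reid_rel_wreath_map_fixed_point_iff:
  assumes G: "group G" and k: "k \<notin> F" and \<sigma>: "\<sigma> permutes insert k F" and \<sigma>k: "\<sigma> k = k"
    and \<phi>: "\<forall>i\<in>insert k F. \<phi> i \<in> hom G G"
    and a: "a \<in> carrier G" "a' \<in> carrier G"
    and z: "z \<in> carrier (power_group G F)" "z' \<in> carrier (power_group G F)"
  shows "(z(k := a), z'(k := a')) \<in> reid_rel (power_group G (insert k F)) (wreath_map (insert k F) \<sigma> \<phi>)
    \<longleftrightarrow> (a, a') \<in> reid_rel G (\<phi> k) \<and> (z, z') \<in> reid_rel (power_group G F) (wreath_map F \<sigma> \<phi>)"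
    (is "?lhs \<longleftrightarrow> ?rhs")
proof -
  let ?I = "insert k F"
  have \<sigma>F: "\<sigma> permutes F" using permutes_superset[OF \<sigma>] \<sigma>k by auto
  have \<sigma>_in_F: "\<sigma> i \<in> F" "\<sigma> i \<noteq> k" if "i \<in> F" for i
    using permutes_in_image[OF \<sigma>F] that k by auto
  have carrier_upd: "z(k := a) \<in> carrier (power_group G ?I)" "z'(k := a') \<in> carrier (power_group G ?I)"
    using a z k by (auto simp: PiE_iff extensional_def)
  note iff_I = reid_rel_wreath_map_iff[OF G \<sigma> \<phi>] and iff_F = reid_rel_wreath_map_iff[OF G \<sigma>F]
  show ?thesis
  proof
    assume ?lhs
    then obtain g where g: "g \<in> carrier (power_group G ?I)"
      and twist: "\<forall>i\<in>?I. (z'(k := a')) i = g i \<otimes>\<^bsub>G\<^esub> (z(k := a)) i \<otimes>\<^bsub>G\<^esub> inv\<^bsub>G\<^esub> (\<phi> i (g (\<sigma> i)))"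
      using iff_I by blast
    have rel_k: "(a, a') \<in> reid_rel G (\<phi> k)"
      using twist g a \<sigma>k unfolding reid_rel_def by (auto intro!: bexI[of _ "g k"])
    have "\<forall>i\<in>F. z' i = restrict g F i \<otimes>\<^bsub>G\<^esub> z i \<otimes>\<^bsub>G\<^esub> inv\<^bsub>G\<^esub> (\<phi> i (restrict g F (\<sigma> i)))"
    proof
      fix i assume i: "i \<in> F"
      then have "i \<noteq> k" using k by auto
      with twist i show "z' i = restrict g F i \<otimes>\<^bsub>G\<^esub> z i \<otimes>\<^bsub>G\<^esub> inv\<^bsub>G\<^esub> (\<phi> i (restrict g F (\<sigma> i)))"
        using \<sigma>_in_F[OF i] by auto
    qed
    moreover have "restrict g F \<in> carrier (power_group G F)" using g by auto
    moreover have "\<forall>i\<in>F. \<phi> i \<in> hom G G" using \<phi> by simp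
    ultimately have "(z, z') \<in> reid_rel (power_group G F) (wreath_map F \<sigma> \<phi>)"
      using iff_F z by blast
    with rel_k show ?rhs ..
  next
    assume ?rhs
    then obtain g0 h where g0: "g0 \<in> carrier G" "a' = g0 \<otimes>\<^bsub>G\<^esub> a \<otimes>\<^bsub>G\<^esub> inv\<^bsub>G\<^esub> (\<phi> k g0)"
      and h: "h \<in> carrier (power_group G F)"
        "\<forall>i\<in>F. z' i = h i \<otimes>\<^bsub>G\<^esub> z i \<otimes>\<^bsub>G\<^esub> inv\<^bsub>G\<^esub> (\<phi> i (h (\<sigma> i)))"
      using iff_F \<phi> unfolding reid_rel_def by auto
    have "h(k := g0) \<in> carrier (power_group G ?I)" using h g0 k by (auto simp: PiE_iff extensional_def)
    moreover have "\<forall>i\<in>?I. (z'(k := a')) i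
        = (h(k := g0)) i \<otimes>\<^bsub>G\<^esub> (z(k := a)) i \<otimes>\<^bsub>G\<^esub> inv\<^bsub>G\<^esub> (\<phi> i ((h(k := g0)) (\<sigma> i)))"
      using g0 h \<sigma>k \<sigma>_in_F k by auto
    ultimately show ?lhs using iff_I carrier_upd by blast
  qed
qed

lemma reidemeister_wreath_map_fixed_point:
  assumes G: "group G" and k: "k \<notin> F" and \<sigma>: "\<sigma> permutes insert k F" and \<sigma>k: "\<sigma> k = k"
    and \<phi>: "\<forall>i\<in>insert k F. \<phi> i \<in> hom G G"
  shows "reidemeister (power_group G (insert k F)) (wreath_map (insert k F) \<sigma> \<phi>)
       = reidemeister G (\<phi> k) * reidemeister (power_group G F) (wreath_map F \<sigma> \<phi>)"
proof -
  let ?I = "insert k F"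
  have \<sigma>F: "\<sigma> permutes F" using permutes_superset[OF \<sigma>] \<sigma>k by auto
  let ?r = "reid_rel (power_group G ?I) (wreath_map ?I \<sigma> \<phi>)"
  let ?s = "rel_Times (reid_rel G (\<phi> k)) (reid_rel (power_group G F) (wreath_map F \<sigma> \<phi>))"
  have equiv_k: "equiv (carrier G) (reid_rel G (\<phi> k))" using reid_rel_equiv G \<phi> by blast
  have equiv_F: "equiv (carrier (power_group G F)) (reid_rel (power_group G F) (wreath_map F \<sigma> \<phi>))"
    using G \<phi> by (intro reid_rel_equiv wreath_map_hom[OF \<sigma>F]) auto
  have "ecard (carrier (power_group G ?I) // ?r) = ecard ((carrier G \<times> carrier (power_group G F)) // ?s)"
  proof (rule ecard_quotient_eq_by_representatives[where e = "\<lambda>(a, z). z(k := a)"])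
    show "equiv (carrier (power_group G ?I)) ?r"
      using G \<phi> by (intro reid_rel_equiv wreath_map_hom[OF \<sigma>]) auto
    show "equiv (carrier G \<times> carrier (power_group G F)) ?s"
      using equiv_rel_Times[OF equiv_k equiv_F] .
    show "(\<lambda>(a, z). z(k := a)) b \<in> carrier (power_group G ?I)"
      if "b \<in> carrier G \<times> carrier (power_group G F)" for b
      using that k by (auto simp: PiE_iff extensional_def)
    show "\<exists>b\<in>carrier G \<times> carrier (power_group G F). (x, (\<lambda>(a, z). z(k := a)) b) \<in> ?r"
      if "x \<in> carrier (power_group G ?I)" for x
    proof -
      have "(restrict x F)(k := x k) = x" using that k by (auto simp: PiE_iff extensional_def)
      then show ?thesis
        using that equiv_class_eq_iff[OF \<open>equiv (carrier (power_group G ?I)) ?r\<close>]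
        by (intro bexI[of _ "(x k, restrict x F)"]) auto
    qed
    show "((\<lambda>(a, z). z(k := a)) b, (\<lambda>(a, z). z(k := a)) b') \<in> ?r \<longleftrightarrow> (b, b') \<in> ?s"
      if "b \<in> carrier G \<times> carrier (power_group G F)" "b' \<in> carrier G \<times> carrier (power_group G F)"
      for b b'
      using that reid_rel_wreath_map_fixed_point_iff[OF G k \<sigma> \<sigma>k \<phi>] by (auto simp: rel_Times_def)
  qed
  then show ?thesis
    unfolding reidemeister_eq_ecard ecard_quotient_rel_Times[OF equiv_k equiv_F] .
qed

text \<open>Since \<open>\<sigma> j = k\<close>, coordinate \<open>k\<close> is merged into coordinate \<open>j\<close>: the wreath map of
  \<open>\<sigma>' = \<sigma> \<circ> (j k)\<close> and \<open>\<phi>'\<^sub>j = \<phi>\<^sub>j \<circ> \<phi>\<^sub>k\<close> on \<open>G\<^sup>F\<close> has the same Reidemeister number.\<close>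
locale wreath_collapse = group G
  for G :: "('a, 'b) monoid_scheme" (structure) +
  fixes F :: "nat set" and k j :: nat and \<sigma> :: "nat \<Rightarrow> nat" and \<phi> :: "nat \<Rightarrow> 'a \<Rightarrow> 'a"
  assumes k_notin: "k \<notin> F" and j_in: "j \<in> F"
    and \<sigma>_permutes: "\<sigma> permutes insert k F" and \<sigma>_j: "\<sigma> j = k"
    and \<phi>_hom: "\<forall>i\<in>insert k F. \<phi> i \<in> hom G G"
begin

definition \<sigma>' :: "nat \<Rightarrow> nat" where
  "\<sigma>' = \<sigma> \<circ> Transposition.transpose j k"

definition \<phi>' :: "nat \<Rightarrow> 'a \<Rightarrow> 'a" where
  "\<phi>' = \<phi>(j := compose (carrier G) (\<phi> j) (\<phi> k))"

lemma j_neq_k: "j \<noteq> k"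
  using j_in k_notin by auto

lemma \<sigma>_eq_k_iff: "\<sigma> i = k \<longleftrightarrow> i = j"
  using permutes_inj[OF \<sigma>_permutes] \<sigma>_j by (metis injD)

lemma \<sigma>_in_F: "i \<in> insert k F \<Longrightarrow> i \<noteq> j \<Longrightarrow> \<sigma> i \<in> F"
  using permutes_in_image[OF \<sigma>_permutes, of i] \<sigma>_eq_k_iff[of i] by simp

lemma \<sigma>_k_in_F: "\<sigma> k \<in> F"
  using \<sigma>_in_F j_neq_k by auto

lemma \<sigma>_k_neq_k: "\<sigma> k \<noteq> k"
  using \<sigma>_k_in_F k_notin by auto

lemma \<sigma>'_apply: "i \<in> F \<Longrightarrow> \<sigma>' i = (if i = j then \<sigma> k else \<sigma> i)"
  using k_notin by (auto simp: \<sigma>'_def Transposition.transpose_def)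

lemma \<sigma>'_permutes: "\<sigma>' permutes F"
proof -
  have "Transposition.transpose j k permutes insert k F" using j_in by (simp add: permutes_swap_id)
  then have "\<sigma>' permutes insert k F" unfolding \<sigma>'_def by (rule permutes_compose[OF _ \<sigma>_permutes])
  moreover have "\<sigma>' i = i" if "i \<in> insert k F - F" for i
    using that \<sigma>_j by (auto simp: \<sigma>'_def)
  ultimately show ?thesis by (rule permutes_superset)
qed

lemma \<phi>'_hom: "\<forall>i\<in>F. \<phi>' i \<in> hom G G"
  using \<phi>_hom j_in by (auto simp: \<phi>'_def intro: hom_compose)

lemma \<phi>_closed: "i \<in> insert k F \<Longrightarrow> x \<in> carrier G \<Longrightarrow> \<phi> i x \<in> carrier G"
  using \<phi>_hom by (auto simp: hom_def)

lemma \<phi>_group_hom: "i \<in> insert k F \<Longrightarrow> group_hom G G (\<phi> i)"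
  using \<phi>_hom by (auto simp: group_hom_def group_hom_axioms_def is_group)

lemma \<phi>_inv: "i \<in> insert k F \<Longrightarrow> x \<in> carrier G \<Longrightarrow> \<phi> i (inv x) = inv (\<phi> i x)"
  by (simp add: group_hom.hom_inv[OF \<phi>_group_hom])

lemma \<phi>_one: "i \<in> insert k F \<Longrightarrow> \<phi> i \<one> = \<one>"
  by (simp add: group_hom.hom_one[OF \<phi>_group_hom])

lemma \<phi>'_other: "i \<noteq> j \<Longrightarrow> \<phi>' i = \<phi> i"
  by (simp add: \<phi>'_def)

lemma \<phi>'_j: "x \<in> carrier G \<Longrightarrow> \<phi>' j x = \<phi> j (\<phi> k x)"
  by (simp add: \<phi>'_def compose_eq)

abbreviation r :: "((nat \<Rightarrow> 'a) \<times> (nat \<Rightarrow> 'a)) set" where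
  "r \<equiv> reid_rel (power_group G (insert k F)) (wreath_map (insert k F) \<sigma> \<phi>)"

abbreviation s :: "((nat \<Rightarrow> 'a) \<times> (nat \<Rightarrow> 'a)) set" where
  "s \<equiv> reid_rel (power_group G F) (wreath_map F \<sigma>' \<phi>')"

lemma r_iff:
  "(x, y) \<in> r \<longleftrightarrow>
    x \<in> carrier (power_group G (insert k F)) \<and> y \<in> carrier (power_group G (insert k F)) \<and>
    (\<exists>g\<in>carrier (power_group G (insert k F)).
      \<forall>i\<in>insert k F. y i = g i \<otimes> x i \<otimes> inv (\<phi> i (g (\<sigma> i))))"
  using reid_rel_wreath_map_iff[OF is_group \<sigma>_permutes \<phi>_hom] .

lemma s_iff:
  "(x, y) \<in> s \<longleftrightarrow> x \<in> carrier (power_group G F) \<and> y \<in> carrier (power_group G F) \<and>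
    (\<exists>g\<in>carrier (power_group G F). \<forall>i\<in>F. y i = g i \<otimes> x i \<otimes> inv (\<phi>' i (g (\<sigma>' i))))"
  using reid_rel_wreath_map_iff[OF is_group \<sigma>'_permutes \<phi>'_hom] .

lemma extend_one_closed:
  "b \<in> carrier (power_group G F) \<Longrightarrow> b(k := \<one>) \<in> carrier (power_group G (insert k F))"
  using k_notin by (auto simp: PiE_iff extensional_def)

text \<open>The twist by the element that is \<open>x\<^sub>k\<inverse>\<close> at \<open>k\<close> and \<open>\<one>\<close> elsewhere clears coordinate \<open>k\<close>
  and moves its contribution \<open>\<phi>\<^sub>j(x\<^sub>k)\<close> to coordinate \<open>j\<close>.\<close>
lemma exists_representative:
  assumes x: "x \<in> carrier (power_group G (insert k F))"
  shows "\<exists>b\<in>carrier (power_group G F). (x, b(k := \<one>)) \<in> r"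
proof -
  have xc: "\<And>i. i \<in> insert k F \<Longrightarrow> x i \<in> carrier G" using x by auto
  define b where "b = (\<lambda>i\<in>F. if i = j then x j \<otimes> \<phi> j (x k) else x i)"
  define g where "g = (\<lambda>i\<in>insert k F. if i = k then inv (x k) else \<one>)"
  have b: "b \<in> carrier (power_group G F)" using xc j_in by (auto simp: b_def \<phi>_closed)
  have g: "g \<in> carrier (power_group G (insert k F))" using xc by (auto simp: g_def)
  have "(b(k := \<one>)) i = g i \<otimes> x i \<otimes> inv (\<phi> i (g (\<sigma> i)))" if i: "i \<in> insert k F" for i
  proof (cases "i = k")
    case True
    then show ?thesis using xc \<sigma>_k_in_F \<sigma>_k_neq_k \<phi>_one by (simp add: g_def)
  next
    case False
    then have "i \<in> F" "\<sigma> i \<in> insert k F" using i permutes_in_image[OF \<sigma>_permutes] by auto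
    then show ?thesis
      using False xc \<sigma>_eq_k_iff \<sigma>_j \<phi>_one \<phi>_inv \<phi>_closed j_in i
      by (auto simp: g_def b_def)
  qed
  then show ?thesis using r_iff x g b extend_one_closed by blast
qed

lemma extend_one_rel_if_rel:
  assumes b: "b \<in> carrier (power_group G F)" "b' \<in> carrier (power_group G F)" and "(b, b') \<in> s"
  shows "(b(k := \<one>), b'(k := \<one>)) \<in> r"
proof -
  obtain h where h: "h \<in> carrier (power_group G F)"
    and twist: "\<forall>i\<in>F. b' i = h i \<otimes> b i \<otimes> inv (\<phi>' i (h (\<sigma>' i)))"
    using \<open>(b, b') \<in> s\<close> s_iff by blast
  have hc: "\<And>i. i \<in> F \<Longrightarrow> h i \<in> carrier G" using h by auto
  define g where "g = h(k := \<phi> k (h (\<sigma> k)))"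
  have g: "g \<in> carrier (power_group G (insert k F))"
    using h hc[OF \<sigma>_k_in_F] k_notin by (auto simp: g_def PiE_iff extensional_def \<phi>_closed)
  have "(b'(k := \<one>)) i = g i \<otimes> (b(k := \<one>)) i \<otimes> inv (\<phi> i (g (\<sigma> i)))" if i: "i \<in> insert k F" for i
  proof -
    consider "i = k" | "i = j" | "i \<in> F" "i \<noteq> j" using i by auto
    then show ?thesis
    proof cases
      case 1
      then show ?thesis using hc[OF \<sigma>_k_in_F] \<sigma>_k_neq_k by (simp add: g_def \<phi>_closed)
    next
      case 2
      then show ?thesis
        using twist j_in j_neq_k \<sigma>_j \<sigma>'_apply hc[OF \<sigma>_k_in_F] \<phi>'_j by (simp add: g_def)
    next
      case 3
      then have "\<sigma> i \<in> F" "\<sigma> i \<noteq> k" using \<sigma>_in_F k_notin by auto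
      then show ?thesis using 3 twist k_notin \<sigma>'_apply \<phi>'_other by (auto simp: g_def)
    qed
  qed
  then show ?thesis using r_iff g b extend_one_closed by blast
qed

lemma rel_if_extend_one_rel:
  assumes b: "b \<in> carrier (power_group G F)" "b' \<in> carrier (power_group G F)"
    and "(b(k := \<one>), b'(k := \<one>)) \<in> r"
  shows "(b, b') \<in> s"
proof -
  obtain g where g: "g \<in> carrier (power_group G (insert k F))"
    and twist: "\<forall>i\<in>insert k F. (b'(k := \<one>)) i = g i \<otimes> (b(k := \<one>)) i \<otimes> inv (\<phi> i (g (\<sigma> i)))"
    using assms(3) r_iff by blast
  have gc: "\<And>i. i \<in> insert k F \<Longrightarrow> g i \<in> carrier G" using g by auto
  have "\<one> = g k \<otimes> inv (\<phi> k (g (\<sigma> k)))"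
    using twist gc by simp
  then have g_k: "g k = \<phi> k (g (\<sigma> k))"
    using gc \<phi>_closed \<sigma>_k_in_F by (simp add: inv_solve_right)
  have "b' i = restrict g F i \<otimes> b i \<otimes> inv (\<phi>' i (restrict g F (\<sigma>' i)))" if i: "i \<in> F" for i
  proof (cases "i = j")
    case True
    have "b' j = g j \<otimes> b j \<otimes> inv (\<phi> j (g (\<sigma> j)))" using twist j_in j_neq_k by auto
    then have "b' j = g j \<otimes> b j \<otimes> inv (\<phi>' j (g (\<sigma> k)))"
      unfolding \<sigma>_j g_k using gc \<sigma>_k_in_F \<phi>'_j by simp
    then show ?thesis using True j_in \<sigma>'_apply \<sigma>_k_in_F by simp
  next
    case False
    have "i \<noteq> k" "i \<in> insert k F" using i k_notin by auto
    then show ?thesis using twist False \<sigma>_in_F[of i] \<sigma>'_apply[OF i] \<phi>'_other by auto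
  qed
  moreover have "restrict g F \<in> carrier (power_group G F)" using g by auto
  ultimately show ?thesis using s_iff b by blast
qed

lemma reidemeister_eq:
  "reidemeister (power_group G (insert k F)) (wreath_map (insert k F) \<sigma> \<phi>) = reidemeister (power_group G F) (wreath_map F \<sigma>' \<phi>')"
  unfolding reidemeister_eq_ecard
proof (rule ecard_quotient_eq_by_representatives[where e = "\<lambda>b. b(k := \<one>)"])
  show "equiv (carrier (power_group G (insert k F))) r"
    using \<phi>_hom by (intro reid_rel_equiv wreath_map_hom[OF \<sigma>_permutes]) (auto simp: is_group)
  show "equiv (carrier (power_group G F)) s"
    using \<phi>'_hom by (intro reid_rel_equiv wreath_map_hom[OF \<sigma>'_permutes]) (auto simp: is_group)
  show "b(k := \<one>) \<in> carrier (power_group G (insert k F))" if "b \<in> carrier (power_group G F)" for b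
    using extend_one_closed[OF that] .
  show "\<exists>b\<in>carrier (power_group G F). (x, b(k := \<one>)) \<in> r" if "x \<in> carrier (power_group G (insert k F))" for x
    using exists_representative[OF that] .
  show "(b(k := \<one>), b'(k := \<one>)) \<in> r \<longleftrightarrow> (b, b') \<in> s"
    if "b \<in> carrier (power_group G F)" "b' \<in> carrier (power_group G F)" for b b'
    using extend_one_rel_if_rel[OF that] rel_if_extend_one_rel[OF that] by blast
qed

end

section \<open>Products of Reidemeister numbers\<close>

lemma prod_set_0: "prod_set S 0 = {1}"
  by (simp add: prod_set_def)

lemma prod_set_Suc: "prod_set S (Suc c) = {a * x |a x. a \<in> S \<and> x \<in> prod_set S c}"
proof safe
  fix y assume "y \<in> prod_set S (Suc c)"
  then obtain a where "\<forall>j<Suc c. a j \<in> S" "y = (\<Prod>j<Suc c. a j)" by (auto simp: prod_set_def)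
  then show "\<exists>b x. y = b * x \<and> b \<in> S \<and> x \<in> prod_set S c"
    by (intro exI[of _ "a c"] exI[of _ "\<Prod>j<c. a j"]) (auto simp: prod_set_def mult.commute)
next
  fix b x assume "b \<in> S" "x \<in> prod_set S c"
  then obtain a where a: "\<forall>j<c. a j \<in> S" "x = (\<Prod>j<c. a j)" by (auto simp: prod_set_def)
  have "b * x = (\<Prod>j<Suc c. (a(c := b)) j)"
    using a(2) by (simp add: mult.commute)
  moreover have "\<forall>j<Suc c. (a(c := b)) j \<in> S"
    using a(1) \<open>b \<in> S\<close> by (auto simp: less_Suc_eq)
  ultimately show "b * x \<in> prod_set S (Suc c)"
    unfolding prod_set_def by blast
qed

lemma (in group) compose_in_auto: "f \<in> auto G \<Longrightarrow> g \<in> auto G \<Longrightarrow> compose (carrier G) f g \<in> auto G"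
  by (auto simp: auto_def intro: hom_compose compose_Bij)

lemma auto_imp_hom: "\<forall>i\<in>I. \<phi> i \<in> auto G \<Longrightarrow> \<forall>i\<in>I. \<phi> i \<in> hom G G"
  by (simp add: auto_def)

lemma reidemeister_wreath_map_singleton:
  assumes "group G" "\<sigma> permutes {k}" "\<phi> k \<in> hom G G"
  shows "reidemeister (power_group G {k}) (wreath_map {k} \<sigma> \<phi>) = reidemeister G (\<phi> k)"
proof -
  have "\<sigma> k = k" using permutes_in_image[OF assms(2)] by simp
  then have "reidemeister (power_group G {k}) (wreath_map {k} \<sigma> \<phi>)
      = reidemeister G (\<phi> k) * reidemeister (power_group G {}) (wreath_map {} \<sigma> \<phi>)"
    using assms by (intro reidemeister_wreath_map_fixed_point) auto
  then show ?thesis by (simp add: reidemeister_trivial_group)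
qed

lemma reidemeister_wreath_map_in_spec_R:
  assumes "group G" "\<sigma> permutes I" "\<forall>i\<in>I. \<phi> i \<in> auto G"
  shows "reidemeister (power_group G I) (wreath_map I \<sigma> \<phi>) \<in> spec_R (power_group G I)"
proof -
  have "reidemeister (power_group G I) (wreath_map I \<sigma> \<phi>)
      = reidemeister (power_group G I) (restrict (wreath_map I \<sigma> \<phi>) (carrier (power_group G I)))"
    by (rule reidemeister_cong) simp
  then show ?thesis unfolding spec_R_def using wreath_map_auto[OF assms] by blast
qed

lemma reidemeister_wreath_map_in_prod_set:
  assumes G: "group G" and "finite I" "I \<noteq> {}" "\<sigma> permutes I" "\<forall>i\<in>I. \<phi> i \<in> auto G"
  shows "\<exists>c\<in>{1..card I}. reidemeister (power_group G I) (wreath_map I \<sigma> \<phi>) \<in> prod_set (spec_R G) c"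
  using assms(2-)
proof (induction I arbitrary: \<sigma> \<phi> rule: finite_ne_induct)
  case (singleton k)
  then have "reidemeister (power_group G {k}) (wreath_map {k} \<sigma> \<phi>) \<in> prod_set (spec_R G) 1"
    using G by (auto simp: reidemeister_wreath_map_singleton auto_def prod_set_Suc prod_set_0 spec_R_def)
  then show ?case by auto
next
  case (insert k F)
  note \<phi>_hom = auto_imp_hom[OF insert.prems(2)]
  show ?case
  proof (cases "\<sigma> k = k")
    case True
    then have "\<sigma> permutes F" using permutes_superset[OF insert.prems(1)] by auto
    then obtain c where c: "c \<in> {1..card F}"
      and in_c: "reidemeister (power_group G F) (wreath_map F \<sigma> \<phi>) \<in> prod_set (spec_R G) c"
      using insert.IH insert.prems(2) by blast
    have "reidemeister (power_group G (insert k F)) (wreath_map (insert k F) \<sigma> \<phi>)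
        = reidemeister G (\<phi> k) * reidemeister (power_group G F) (wreath_map F \<sigma> \<phi>)"
      by (rule reidemeister_wreath_map_fixed_point[OF G insert.hyps(3) insert.prems(1) True \<phi>_hom])
    also have "\<dots> \<in> prod_set (spec_R G) (Suc c)"
      using in_c insert.prems(2) by (auto simp: prod_set_Suc spec_R_def)
    finally show ?thesis using c insert.hyps by auto
  next
    case False
    define j where "j = Hilbert_Choice.inv \<sigma> k"
    have "\<sigma> j = k" "j \<in> insert k F"
      using permutes_inverses[OF insert.prems(1)] permutes_in_image[OF permutes_inv[OF insert.prems(1)]]
      by (auto simp: j_def)
    with False have "j \<in> F" by auto
    interpret wreath_collapse G F k j \<sigma> \<phi>
      unfolding wreath_collapse_def wreath_collapse_axioms_def
      by (use G insert.hyps(3) \<open>j \<in> F\<close> insert.prems(1) \<open>\<sigma> j = k\<close> \<phi>_hom in auto)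
    have "\<forall>i\<in>F. \<phi>' i \<in> auto G"
      using insert.prems(2) j_in by (auto simp: \<phi>'_def compose_in_auto)
    then obtain c where "c \<in> {1..card F}"
      "reidemeister (power_group G F) (wreath_map F \<sigma>' \<phi>') \<in> prod_set (spec_R G) c"
      using insert.IH \<sigma>'_permutes by blast
    then show ?thesis using reidemeister_eq insert.hyps by (intro bexI[of _ c]) auto
  qed
qed

lemma reidemeister_wreath_map_insert_fixed_point:
  assumes G: "group G" and \<sigma>: "\<sigma> permutes F" and k: "k \<notin> F"
    and \<phi>: "\<forall>i\<in>F. \<phi> i \<in> hom G G" and \<theta>: "\<theta> \<in> hom G G"
  shows "reidemeister (power_group G (insert k F)) (wreath_map (insert k F) \<sigma> (\<phi>(k := \<theta>)))
       = reidemeister G \<theta> * reidemeister (power_group G F) (wreath_map F \<sigma> \<phi>)"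
proof -
  have "reidemeister (power_group G (insert k F)) (wreath_map (insert k F) \<sigma> (\<phi>(k := \<theta>)))
      = reidemeister G ((\<phi>(k := \<theta>)) k) * reidemeister (power_group G F) (wreath_map F \<sigma> (\<phi>(k := \<theta>)))"
    using \<phi> \<theta> permutes_subset[OF \<sigma>, of "insert k F"] permutes_not_in[OF \<sigma> k]
    by (intro reidemeister_wreath_map_fixed_point[OF G k]) auto
  also have "reidemeister (power_group G F) (wreath_map F \<sigma> (\<phi>(k := \<theta>)))
      = reidemeister (power_group G F) (wreath_map F \<sigma> \<phi>)"
    using k by (intro reidemeister_wreath_map_cong[OF \<sigma>]) auto
  finally show ?thesis unfolding fun_upd_same .
qed

lemma reidemeister_wreath_map_insert_into_cycle:
  assumes G: "group G" and \<sigma>: "\<sigma> permutes F" and k: "k \<notin> F" and j: "j \<in> F"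
    and \<phi>: "\<forall>i\<in>F. \<phi> i \<in> hom G G"
  shows "reidemeister (power_group G (insert k F))
      (wreath_map (insert k F) (\<sigma> \<circ> Transposition.transpose j k) (\<phi>(k := (\<lambda>x\<in>carrier G. x))))
    = reidemeister (power_group G F) (wreath_map F \<sigma> \<phi>)"
proof -
  let ?\<sigma> = "\<sigma> \<circ> Transposition.transpose j k" and ?\<phi> = "\<phi>(k := (\<lambda>x\<in>carrier G. x))"
  have "Transposition.transpose j k permutes insert k F" using j by (simp add: permutes_swap_id)
  then have "?\<sigma> permutes insert k F" by (rule permutes_compose[OF _ permutes_subset[OF \<sigma>]]) blast
  moreover have "?\<sigma> j = k" using permutes_not_in[OF \<sigma> k] by simp
  moreover have "\<forall>i\<in>insert k F. ?\<phi> i \<in> hom G G"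
    using \<phi> group.id_in_auto[OF G] by (simp add: auto_def)
  ultimately interpret wreath_collapse G F k j ?\<sigma> ?\<phi>
    using G k j by (simp add: wreath_collapse_def wreath_collapse_axioms_def)
  have "\<sigma>' = \<sigma>" unfolding \<sigma>'_def by (simp add: comp_assoc)
  moreover have "\<forall>i\<in>F. \<forall>y\<in>carrier G. \<phi>' i y = \<phi> i y"
    using k j unfolding \<phi>'_def by (auto simp: compose_eq)
  ultimately have "reidemeister (power_group G F) (wreath_map F \<sigma>' \<phi>')
      = reidemeister (power_group G F) (wreath_map F \<sigma> \<phi>)"
    by (intro reidemeister_wreath_map_cong[OF \<sigma>'_permutes]) auto
  with reidemeister_eq show ?thesis by simp
qed

lemma prod_set_in_reidemeister_wreath_maps:
  assumes G: "group G" and "finite I" "c \<in> {1..card I}" "x \<in> prod_set (spec_R G) c"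
  shows "\<exists>\<sigma> \<phi>. \<sigma> permutes I \<and> (\<forall>i\<in>I. \<phi> i \<in> auto G) \<and>
    reidemeister (power_group G I) (wreath_map I \<sigma> \<phi>) = x"
proof -
  have "I \<noteq> {}" using assms(3) by auto
  from \<open>finite I\<close> this assms(3,4) show ?thesis
  proof (induction I arbitrary: c x rule: finite_ne_induct)
    case (singleton k)
    then have "x \<in> prod_set (spec_R G) (Suc 0)" by simp
    then obtain \<theta> where \<theta>: "\<theta> \<in> auto G" and x: "x = reidemeister G \<theta>"
      by (auto simp: prod_set_Suc prod_set_0 spec_R_def)
    show ?case
    proof (intro exI conjI)
      show "id permutes {k}" by (rule permutes_id)
      show "\<forall>i\<in>{k}. (\<lambda>_. \<theta>) i \<in> auto G" using \<theta> by simp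
      show "reidemeister (power_group G {k}) (wreath_map {k} id (\<lambda>_. \<theta>)) = x"
        using reidemeister_wreath_map_singleton[OF G permutes_id] \<theta> x by (simp add: auto_def)
    qed
  next
    case (insert k F)
    obtain c' where c': "c = Suc c'" using insert.prems(1) by (cases c) auto
    then obtain \<theta> y where \<theta>: "\<theta> \<in> auto G" and y: "y \<in> prod_set (spec_R G) c'"
      and x: "x = reidemeister G \<theta> * y"
      using insert.prems(2) by (auto simp: prod_set_Suc spec_R_def)
    show ?case
    proof (cases "c' = 0")
      case True
      have "1 \<in> {1..card F}" using insert.hyps(1,2) by (simp add: Suc_le_eq card_gt_0_iff)
      then obtain \<sigma> \<phi> where \<sigma>: "\<sigma> permutes F" and \<phi>: "\<forall>i\<in>F. \<phi> i \<in> auto G"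
        and x_F: "reidemeister (power_group G F) (wreath_map F \<sigma> \<phi>) = x"
        using insert.IH[of 1 x] insert.prems(2) c' True by auto
      obtain j where j: "j \<in> F" using insert.hyps(2) by auto
      have "Transposition.transpose j k permutes insert k F" using j by (simp add: permutes_swap_id)
      then have "\<sigma> \<circ> Transposition.transpose j k permutes insert k F"
        by (rule permutes_compose[OF _ permutes_subset[OF \<sigma>]]) blast
      moreover have "\<forall>i\<in>insert k F. (\<phi>(k := (\<lambda>x\<in>carrier G. x))) i \<in> auto G"
        using \<phi> group.id_in_auto[OF G] by simp
      moreover note reidemeister_wreath_map_insert_into_cycle[OF G \<sigma> insert.hyps(3) j
          auto_imp_hom[OF \<phi>]]
      ultimately show ?thesis using x_F
        by (intro exI[of _ "\<sigma> \<circ> Transposition.transpose j k"] exI[of _ "\<phi>(k := (\<lambda>x\<in>carrier G. x))"])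
          blast
    next
      case False
      then have "c' \<in> {1..card F}" using insert.prems(1) c' insert.hyps(1,3) by auto
      then obtain \<sigma> \<phi> where \<sigma>: "\<sigma> permutes F" and \<phi>: "\<forall>i\<in>F. \<phi> i \<in> auto G"
        and y_F: "reidemeister (power_group G F) (wreath_map F \<sigma> \<phi>) = y"
        using insert.IH[of c' y] y by blast
      have "\<theta> \<in> hom G G" using \<theta> by (simp add: auto_def)
      have "\<sigma> permutes insert k F" using permutes_subset[OF \<sigma>] by blast
      moreover have "\<forall>i\<in>insert k F. (\<phi>(k := \<theta>)) i \<in> auto G" using \<phi> \<theta> by simp
      moreover note reidemeister_wreath_map_insert_fixed_point[OF G \<sigma> insert.hyps(3)
          auto_imp_hom[OF \<phi>] \<open>\<theta> \<in> hom G G\<close>]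
      ultimately show ?thesis using x y_F by (intro exI[of _ \<sigma>] exI[of _ "\<phi>(k := \<theta>)"]) blast
    qed
  qed
qed

lemma prod_set_subset_spec_R_power_group:
  assumes "group G" "finite I"
  shows "(\<Union>c\<in>{1..card I}. prod_set (spec_R G) c) \<subseteq> spec_R (power_group G I)"
  using prod_set_in_reidemeister_wreath_maps[OF assms] reidemeister_wreath_map_in_spec_R[OF assms(1)]
  by blast

lemma spec_R_power_group_subset_prod_set:
  assumes "group G" "finite I" "I \<noteq> {}"
    and wreath: "\<forall>\<psi>\<in>auto (power_group G I). \<exists>\<phi> \<sigma>. \<sigma> permutes I \<and> (\<forall>i\<in>I. \<phi> i \<in> auto G) \<and>
      (\<forall>x\<in>carrier (power_group G I). \<psi> x = wreath_map I \<sigma> \<phi> x)"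
  shows "spec_R (power_group G I) \<subseteq> (\<Union>c\<in>{1..card I}. prod_set (spec_R G) c)"
proof
  fix x assume "x \<in> spec_R (power_group G I)"
  then obtain \<psi> where \<psi>: "\<psi> \<in> auto (power_group G I)" and x: "x = reidemeister (power_group G I) \<psi>"
    by (auto simp: spec_R_def)
  obtain \<phi> \<sigma> where \<sigma>: "\<sigma> permutes I" and \<phi>: "\<forall>i\<in>I. \<phi> i \<in> auto G"
    and "\<forall>x\<in>carrier (power_group G I). \<psi> x = wreath_map I \<sigma> \<phi> x"
    using wreath \<psi> by blast
  then have "x = reidemeister (power_group G I) (wreath_map I \<sigma> \<phi>)"
    unfolding x by (intro reidemeister_cong) auto
  then show "x \<in> (\<Union>c\<in>{1..card I}. prod_set (spec_R G) c)"
    using reidemeister_wreath_map_in_prod_set[OF assms(1-3) \<sigma> \<phi>] by auto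
qed

theorem mainTheorem6:
  fixes G :: "('a, 'b) monoid_scheme" and n :: nat
  assumes "group G" and "n \<ge> 1"
  shows "(\<Union>i\<in>{1..n}. prod_set (spec_R G) i) \<subseteq> spec_R (dir_power G n) \<and>
         ((\<forall>\<psi>\<in>auto (dir_power G n). \<exists>\<phi> \<sigma>. \<sigma> permutes {..<n} \<and> (\<forall>i<n. \<phi> i \<in> auto G) \<and>
            (\<forall>x\<in>carrier (dir_power G n). \<psi> x = (\<lambda>i\<in>{..<n}. \<phi> i (x (\<sigma> i)))))
          \<longrightarrow> (\<Union>i\<in>{1..n}. prod_set (spec_R G) i) = spec_R (dir_power G n))"
proof -
  have power: "dir_power G n = power_group G {..<n}" by (simp add: dir_power_def)
  have "{..<n} \<noteq> {}" using assms(2) by (auto simp: lessThan_empty_iff)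
  have "(\<Union>i\<in>{1..n}. prod_set (spec_R G) i) \<subseteq> spec_R (power_group G {..<n})"
    using prod_set_subset_spec_R_power_group[OF assms(1), of "{..<n}"] by simp
  moreover have "spec_R (power_group G {..<n}) \<subseteq> (\<Union>i\<in>{1..n}. prod_set (spec_R G) i)"
    if wreath: "\<forall>\<psi>\<in>auto (power_group G {..<n}). \<exists>\<phi> \<sigma>. \<sigma> permutes {..<n} \<and> (\<forall>i<n. \<phi> i \<in> auto G) \<and>
      (\<forall>x\<in>carrier (power_group G {..<n}). \<psi> x = (\<lambda>i\<in>{..<n}. \<phi> i (x (\<sigma> i))))"
  proof -
    have "\<exists>\<phi> \<sigma>. \<sigma> permutes {..<n} \<and> (\<forall>i\<in>{..<n}. \<phi> i \<in> auto G) \<and>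
        (\<forall>x\<in>carrier (power_group G {..<n}). \<psi> x = wreath_map {..<n} \<sigma> \<phi> x)"
      if \<psi>: "\<psi> \<in> auto (power_group G {..<n})" for \<psi>
    proof -
      obtain \<phi> \<sigma> where "\<sigma> permutes {..<n}" "\<forall>i<n. \<phi> i \<in> auto G"
        "\<forall>x\<in>carrier (power_group G {..<n}). \<psi> x = (\<lambda>i\<in>{..<n}. \<phi> i (x (\<sigma> i)))"
        using wreath \<psi> by blast
      then show ?thesis unfolding wreath_map_def by (intro exI[of _ \<phi>] exI[of _ \<sigma>]) auto
    qed
    then show ?thesis
      using spec_R_power_group_subset_prod_set[OF assms(1) finite_lessThan \<open>{..<n} \<noteq> {}\<close>] by simp
  qed
  ultimately show ?thesis unfolding power by (intro conjI impI equalityI) simp_all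
qed

end
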